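(* For $k\geq 3$ and $$n > \frac{2}{\ln(2)}k^{2}+\left(2-\frac{3}{\ln(2)}\right)k+\frac{1}{\ln(2)} \geq \frac{2^{\frac{1}{k-1}}(2k)-1}{2^{\frac{1}{k-1}}-1},$$ we have $t(K(n,k))=\frac{n}{k}-1$. Moreover, if $S$ is a vertex cut of $K(n,k)$ such that $\frac{|S|}{c(K(n,k)\setminus S)}=\frac{n}{k}-1$, then $S$ is the complement of a maximum independent set.
   Context: The Kneser graph $K(n,k)$ has as vertices the $k$-element subsets of $[n]=\{1,\dots,n\}$, two vertices being adjacent iff they are disjoint. A vertex cut is a set $S$ of vertices whose removal disconnects the graph; $c(G\setminus S)$ is the number of connected components after deleting $S$; the toughness is $t(G)=\min_S |S|/c(G\setminus S)$ over vertex cuts $S$. *)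

theory Defs
  imports Complex_Main
begin

definition kneser_vertices :: "nat \<Rightarrow> nat \<Rightarrow> nat set set" where
  "kneser_vertices n k = {A. A \<subseteq> {1..n} \<and> card A = k}"

definition kneser_adj :: "nat set \<Rightarrow> nat set \<Rightarrow> bool" where
  "kneser_adj A B \<longleftrightarrow> A \<inter> B = {}"

definition reach_in :: "'a set \<Rightarrow> ('a \<Rightarrow> 'a \<Rightarrow> bool) \<Rightarrow> 'a \<Rightarrow> 'a \<Rightarrow> bool" where
  "reach_in W E = (\<lambda>x y. x \<in> W \<and> y \<in> W \<and> E x y)\<^sup>*\<^sup>*"

definition components :: "'a set \<Rightarrow> ('a \<Rightarrow> 'a \<Rightarrow> bool) \<Rightarrow> 'a set set" where
  "components W E = (\<lambda>x. {y \<in> W. reach_in W E x y}) ` W"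

definition num_components :: "'a set \<Rightarrow> ('a \<Rightarrow> 'a \<Rightarrow> bool) \<Rightarrow> nat" where
  "num_components W E = card (components W E)"

definition vertex_cut :: "'a set \<Rightarrow> ('a \<Rightarrow> 'a \<Rightarrow> bool) \<Rightarrow> 'a set \<Rightarrow> bool" where
  "vertex_cut V E S \<longleftrightarrow> S \<subseteq> V \<and> num_components (V - S) E \<ge> 2"

definition toughness :: "'a set \<Rightarrow> ('a \<Rightarrow> 'a \<Rightarrow> bool) \<Rightarrow> real" where
  "toughness V E = Inf {real (card S) / real (num_components (V - S) E) | S. vertex_cut V E S}"

definition independent_set :: "'a set \<Rightarrow> ('a \<Rightarrow> 'a \<Rightarrow> bool) \<Rightarrow> 'a set \<Rightarrow> bool" where
  "independent_set V E I \<longleftrightarrow> I \<subseteq> V \<and> (\<forall>x\<in>I. \<forall>y\<in>I. \<not> E x y)"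

definition max_independent_set :: "'a set \<Rightarrow> ('a \<Rightarrow> 'a \<Rightarrow> bool) \<Rightarrow> 'a set \<Rightarrow> bool" where
  "max_independent_set V E I \<longleftrightarrow> independent_set V E I \<and>
     (\<forall>J. independent_set V E J \<longrightarrow> card J \<le> card I)"

end

theory Submission
  imports Defs "HOL-Combinatorics.Multiset_Permutations"
begin

text \<open>
  Let \<open>S\<close> be a vertex cut of \<open>K(n,k)\<close> leaving \<open>c\<close> components. The vertices outside a
  component \<open>C\<close> with no neighbour in \<open>C\<close> form a family cross-intersecting with \<open>C\<close>, and two
  cross-intersecting families of \<open>k\<close>-sets together miss at least \<open>C(n-k,k)\<close> vertices (this is
  where \<open>C(n,k) + 2 C(n-2k,k) < 3 C(n-k,k)\<close> is used); so \<open>C\<close> has at least \<open>C(n-k,k)\<close>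
  neighbours, all of them in \<open>S\<close>. A vertex \<open>Z \<in> S\<close> is adjacent to at most \<open>C(n-k-1,k-1)\<close>
  components, because representatives disjoint from \<open>Z\<close> of different components form an
  intersecting family on the \<open>n - k\<close> points outside \<open>Z\<close> (Erdos-Ko-Rado). Double counting gives
  \<open>c C(n-k,k) \<le> C(n-k-1,k-1) |S|\<close>, i.e. \<open>|S| / c \<ge> n / k - 1\<close>, with equality for the
  complement of a star.

  If equality holds, all estimates are tight: \<open>V - S\<close> is intersecting, has \<open>C(n-1,k-1)\<close>
  members, and every vertex outside it is disjoint from at least \<open>C(n-k-1,k-1)\<close> of them; when
  \<open>C(n-1,k-1) < 2 C(n-k-1,k-1)\<close> such a family is a star. The hypothesis on \<open>n\<close> yields
  \<open>C(n,k) < 2 C(n-k,k)\<close>, from which both binomial conditions follow.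
\<close>

section \<open>Intersecting families and the Erdos--Ko--Rado theorem\<close>

definition intersecting :: "'a set set \<Rightarrow> bool" where
  "intersecting F \<longleftrightarrow> (\<forall>A\<in>F. \<forall>B\<in>F. A \<inter> B \<noteq> {})"

definition arc :: "nat \<Rightarrow> 'a list \<Rightarrow> nat \<Rightarrow> 'a set" where
  "arc k xs i = set (take k (rotate i xs))"

lemma arc_rotate: "arc k (rotate j xs) i = arc k xs (i + j)"
  unfolding arc_def by (simp add: rotate_rotate)

lemma arc_mod: "arc k xs (i mod length xs) = arc k xs i"
  unfolding arc_def by (metis rotate_conv_mod)

lemma disjoint_arcs:
  assumes "distinct xs" "0 < k" "k \<le> d" "d + k \<le> length xs"
  shows "arc k xs 0 \<inter> arc k xs d = {}"
proof -
  have "rotate d xs = drop d xs @ take d xs"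
    using rotate_drop_take[of d xs] assms by simp
  then have "take k (rotate d xs) = take k (drop d xs)"
    using assms by simp
  then have "arc k xs d \<subseteq> set (drop d xs)"
    unfolding arc_def by (metis set_take_subset)
  moreover have "take k xs = take k (take d xs)"
    using assms by (simp add: min_def)
  then have "arc k xs 0 \<subseteq> set (take d xs)"
    unfolding arc_def by (metis rotate0 id_apply set_take_subset)
  ultimately show ?thesis
    using set_take_disj_set_drop_if_distinct[OF assms(1), of d d] by blast
qed

lemma disjoint_arcs_opposite:
  assumes "distinct xs" "0 < k" "2 * k \<le> length xs"
  shows "arc k xs i \<inter> arc k xs (i + (length xs - k)) = {}"
proof -
  have "arc k (rotate i xs) 0 \<inter> arc k (rotate i xs) (length xs - k) = {}"
    using disjoint_arcs[of "rotate i xs" k "length xs - k"] assms by auto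
  then show ?thesis
    by (simp add: arc_rotate add.commute)
qed

lemma card_filter_lessThan_add_mod:
  fixes j m :: nat
  assumes "j < m"
  shows "card {i\<in>{..<m}. P ((i + j) mod m)} = card {i\<in>{..<m}. P i}"
proof -
  have "bij_betw (\<lambda>i. (i + j) mod m) {i\<in>{..<m}. P ((i + j) mod m)} {i\<in>{..<m}. P i}"
  proof (rule bij_betwI[where g = "\<lambda>i. (i + (m - j)) mod m"])
    have "((i + j) mod m + (m - j)) mod m = i" if "i < m" for i
    proof -
      have "((i + j) mod m + (m - j)) mod m = (i + j + (m - j)) mod m"
        by (rule mod_add_left_eq)
      also have "i + j + (m - j) = i + m"
        using assms by simp
      finally show ?thesis
        using that by simp
    qed
    moreover have "((i + (m - j)) mod m + j) mod m = i" if "i < m" for i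
    proof -
      have "((i + (m - j)) mod m + j) mod m = (i + (m - j) + j) mod m"
        by (rule mod_add_left_eq)
      also have "i + (m - j) + j = i + m"
        using assms by simp
      finally show ?thesis
        using that by simp
    qed
    ultimately show "(\<lambda>i. (i + j) mod m) \<in> {i\<in>{..<m}. P ((i + j) mod m)} \<rightarrow> {i\<in>{..<m}. P i}"
      and "(\<lambda>i. (i + (m - j)) mod m) \<in> {i\<in>{..<m}. P i} \<rightarrow> {i\<in>{..<m}. P ((i + j) mod m)}"
      and "\<And>i. i \<in> {i\<in>{..<m}. P ((i + j) mod m)} \<Longrightarrow> ((i + j) mod m + (m - j)) mod m = i"
      and "\<And>i. i \<in> {i\<in>{..<m}. P i} \<Longrightarrow> ((i + (m - j)) mod m + j) mod m = i"
      using assms by auto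
  qed
  then show ?thesis by (rule bij_betw_same_card)
qed

text \<open>Katona's circle argument: every arc in \<open>F\<close> meets \<open>arc k xs 0\<close>, so it starts at \<open>0\<close>, at some
  \<open>i\<close> or at some \<open>i + (m - k)\<close> with \<open>0 < i < k\<close> and \<open>m = length xs\<close>. The arcs at \<open>i\<close> and
  \<open>i + (m - k)\<close> are disjoint, so at most one of them is in \<open>F\<close> and \<open>\<psi>\<close> is injective.\<close>
lemma card_arcs_in_intersecting_le_arc0:
  assumes xs: "distinct xs" and len: "2 * k \<le> length xs"
    and F: "intersecting F" and arc0: "arc k xs 0 \<in> F"
  shows "card {i\<in>{..<length xs}. arc k xs i \<in> F} \<le> k"
proof -
  define m where "m = length xs"
  let ?D = "{i\<in>{..<m}. arc k xs i \<in> F}"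
  have not_both: "\<not> (arc k xs i \<in> F \<and> arc k xs j \<in> F)" if "arc k xs i \<inter> arc k xs j = {}" for i j
    using F that unfolding intersecting_def by blast
  have "arc k xs 0 \<noteq> {}"
    using F arc0 unfolding intersecting_def by blast
  then have k: "0 < k"
    unfolding arc_def by (cases k) auto
  have near0: "i < k \<or> m - k < i" if "i \<in> ?D" for i
    using not_both[of 0 i] disjoint_arcs[OF xs k, of i] arc0 that unfolding m_def by fastforce
  have opposite: "\<not> (arc k xs i \<in> F \<and> arc k xs (i + (m - k)) \<in> F)" for i
    using not_both disjoint_arcs_opposite[OF xs k len] unfolding m_def by blast
  define \<psi> where "\<psi> i = (if i < k then i else i + k - m)" for i
  have "inj_on \<psi> ?D"
  proof (rule inj_onI)
    fix i j assume i: "i \<in> ?D" and j: "j \<in> ?D" and eq: "\<psi> i = \<psi> j"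
    have mixed: False if "a \<in> ?D" "b \<in> ?D" "a < k" "\<not> b < k" "\<psi> a = \<psi> b" for a b
    proof -
      have "m - k < b" "b < m"
        using near0 that by auto
      then have "b = a + (m - k)"
        using that len unfolding \<psi>_def m_def by simp
      then show False
        using opposite[of a] that by auto
    qed
    show "i = j"
    proof (cases "i < k"; cases "j < k")
      assume "i < k" "j < k"
      then show ?thesis using eq unfolding \<psi>_def by simp
    next
      assume "i < k" "\<not> j < k"
      then show ?thesis using mixed[OF i j] eq by blast
    next
      assume "\<not> i < k" "j < k"
      then show ?thesis using mixed[OF j i] eq by simp
    next
      assume "\<not> i < k" "\<not> j < k"
      then show ?thesis using near0[OF i] near0[OF j] eq unfolding \<psi>_def by simp
    qed
  qed
  moreover have "\<psi> i < k" if "i \<in> ?D" for i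
    using near0[OF that] that len unfolding \<psi>_def m_def by auto
  then have "\<psi> ` ?D \<subseteq> {..<k}"
    by auto
  ultimately show ?thesis
    using card_inj_on_le[of \<psi> ?D "{..<k}"] unfolding m_def by simp
qed

lemma card_arcs_in_intersecting_le:
  assumes "distinct xs" "2 * k \<le> length xs" "intersecting F"
  shows "card {i\<in>{..<length xs}. arc k xs i \<in> F} \<le> k"
proof (cases "\<exists>j<length xs. arc k xs j \<in> F")
  case False
  then have "{i\<in>{..<length xs}. arc k xs i \<in> F} = {}" by auto
  then show ?thesis by (metis card.empty zero_le)
next
  case True
  then obtain j where j: "j < length xs" "arc k xs j \<in> F" by blast
  have "card {i\<in>{..<length xs}. arc k xs i \<in> F}
      = card {i\<in>{..<length xs}. arc k xs ((i + j) mod length xs) \<in> F}"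
    using card_filter_lessThan_add_mod[OF j(1), where P = "\<lambda>i. arc k xs i \<in> F"] by simp
  also have "\<dots> = card {i\<in>{..<length (rotate j xs)}. arc k (rotate j xs) i \<in> F}"
    by (simp add: arc_rotate arc_mod)
  also have "\<dots> \<le> k"
    using assms j by (intro card_arcs_in_intersecting_le_arc0) (auto simp: arc_rotate)
  finally show ?thesis .
qed

lemma inj_rotate: "inj (rotate i)"
  unfolding rotate_def by (simp add: inj_rotate1)

lemma rotate_permutations_of_set:
  assumes "finite U"
  shows "rotate i ` permutations_of_set U = permutations_of_set U"
proof -
  have sub: "rotate i ` permutations_of_set U \<subseteq> permutations_of_set U"
    by (auto simp: permutations_of_set_def)
  moreover have "card (rotate i ` permutations_of_set U) = card (permutations_of_set U)"
    using card_image[OF inj_on_subset[OF inj_rotate subset_UNIV]] .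
  ultimately show ?thesis
    using card_subset_eq[OF finite_permutations_of_set] by metis
qed

lemma card_permutations_rotate:
  assumes "finite U"
  shows "card {xs \<in> permutations_of_set U. P (rotate i xs)} = card {xs \<in> permutations_of_set U. P xs}"
proof -
  have "rotate i ` {xs \<in> permutations_of_set U. P (rotate i xs)} = {ys \<in> rotate i ` permutations_of_set U. P ys}"
    by auto
  then show ?thesis
    using rotate_permutations_of_set[OF assms] card_image[OF inj_on_subset[OF inj_rotate subset_UNIV]]
    by metis
qed

lemma card_permutations_prefix:
  assumes "finite U" "A \<subseteq> U"
  shows "card {xs \<in> permutations_of_set U. set (take (card A) xs) = A}
    = fact (card A) * fact (card U - card A)"
proof -
  let ?k = "card A"
  let ?P = "permutations_of_set A \<times> permutations_of_set (U - A)"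
  have "finite A"
    using finite_subset[OF assms(2,1)] .
  note len = length_finite_permutations_of_set[of _ A]
  have "bij_betw (\<lambda>(ys, zs). ys @ zs) ?P {xs \<in> permutations_of_set U. set (take ?k xs) = A}"
  proof (rule bij_betw_imageI)
    show "inj_on (\<lambda>(ys, zs). ys @ zs) ?P"
      by (rule inj_onI) (auto dest!: len)
    show "(\<lambda>(ys, zs). ys @ zs) ` ?P = {xs \<in> permutations_of_set U. set (take ?k xs) = A}"
    proof (intro equalityI subsetI)
      fix xs assume "xs \<in> (\<lambda>(ys, zs). ys @ zs) ` ?P"
      then show "xs \<in> {xs \<in> permutations_of_set U. set (take ?k xs) = A}"
        using assms(2) by (auto simp: permutations_of_set_def distinct_card)
    next
      fix xs assume "xs \<in> {xs \<in> permutations_of_set U. set (take ?k xs) = A}"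
      then have xs: "distinct xs" "set xs = U" "set (take ?k xs) = A"
        by (auto simp: permutations_of_set_def)
      have "set (take ?k xs) \<inter> set (drop ?k xs) = {}"
        using set_take_disj_set_drop_if_distinct[OF xs(1), of ?k ?k] by simp
      moreover have "set (take ?k xs) \<union> set (drop ?k xs) = U"
        using xs(2) by (metis append_take_drop_id set_append)
      ultimately have "(take ?k xs, drop ?k xs) \<in> ?P"
        using xs by (auto simp: permutations_of_set_def)
      then show "xs \<in> (\<lambda>(ys, zs). ys @ zs) ` ?P"
        by (rule rev_image_eqI) simp
    qed
  qed
  then have "card {xs \<in> permutations_of_set U. set (take ?k xs) = A} = card ?P"
    by (simp add: bij_betw_same_card)
  also have "\<dots> = fact ?k * fact (card U - ?k)"
    using assms \<open>finite A\<close> by (simp add: card_cartesian_product card_Diff_subset)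
  finally show ?thesis .
qed

text \<open>Katona's proof: count the pairs \<open>(xs, i)\<close> of a permutation of \<open>U\<close> and a position with
  \<open>arc k xs i \<in> F\<close>. Each permutation has at most \<open>k\<close> such positions, and for each position
  there are exactly \<open>card F * k! * (card U - k)!\<close> such permutations.\<close>
theorem Erdos_Ko_Rado:
  assumes U: "finite U" and F: "F \<subseteq> {A. A \<subseteq> U \<and> card A = k}" "intersecting F"
    and k: "0 < k" "2 * k \<le> card U"
  shows "card F \<le> (card U - 1) choose (k - 1)"
proof -
  define m where "m = card U"
  let ?P = "permutations_of_set U"
  have "finite F"
    using U F(1) by (auto intro: finite_subset[of F "Pow U"])
  have "(\<Sum>i<m. card {xs\<in>?P. arc k xs i \<in> F}) = (\<Sum>xs\<in>?P. card {i\<in>{..<m}. arc k xs i \<in> F})"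
    using sum_multicount_gen[of "{..<m}" ?P "\<lambda>i xs. arc k xs i \<in> F"] U by simp
  also have "\<dots> \<le> (\<Sum>xs\<in>?P. k)"
  proof (rule sum_mono)
    fix xs assume "xs \<in> ?P"
    then have "distinct xs" "length xs = m"
      unfolding m_def by (auto simp: permutations_of_set_def distinct_card)
    then show "card {i\<in>{..<m}. arc k xs i \<in> F} \<le> k"
      using card_arcs_in_intersecting_le[of xs k F] k F unfolding m_def by simp
  qed
  finally have upper: "(\<Sum>i<m. card {xs\<in>?P. arc k xs i \<in> F}) \<le> fact m * k"
    using U unfolding m_def by simp
  have "card {xs\<in>?P. set (take k xs) \<in> F} = (\<Sum>A\<in>F. card {xs\<in>?P. set (take k xs) = A})"
    using \<open>finite F\<close> by (subst card_UN_disjoint[symmetric]) (auto intro!: arg_cong[where f = card])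
  also have "\<dots> = (\<Sum>A\<in>F. fact k * fact (m - k))"
    using card_permutations_prefix[OF U] F(1) unfolding m_def by (intro sum.cong) auto
  also have "\<dots> = card F * (fact k * fact (m - k))"
    by simp
  finally have arcs_at: "card {xs\<in>?P. arc k xs i \<in> F} = card F * (fact k * fact (m - k))" for i
    using card_permutations_rotate[OF U, of "\<lambda>ys. set (take k ys) \<in> F" i] unfolding arc_def by simp
  have "m * (card F * (fact k * fact (m - k))) \<le> fact m * k"
    using upper unfolding arcs_at by simp
  moreover have "fact m = m * fact (m - 1)" "fact k = k * fact (k - 1)"
    using k by (simp_all add: m_def fact_reduce)
  moreover have "fact (m - 1) = fact (k - 1) * fact (m - k) * ((m - 1) choose (k - 1))"
    using binomial_fact_lemma[of "k - 1" "m - 1"] k unfolding m_def by simp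
  ultimately have "(m * k * fact (k - 1) * fact (m - k)) * card F
      \<le> (m * k * fact (k - 1) * fact (m - k)) * ((m - 1) choose (k - 1))"
    by (simp add: ac_simps)
  then show ?thesis
    using k unfolding m_def by simp
qed

section \<open>Connected components and cuts\<close>

definition component_of :: "'a set \<Rightarrow> ('a \<Rightarrow> 'a \<Rightarrow> bool) \<Rightarrow> 'a \<Rightarrow> 'a set" where
  "component_of W E x = {y \<in> W. reach_in W E x y}"

lemma components_eq_image_component_of: "components W E = component_of W E ` W"
  unfolding components_def component_of_def ..

lemma finite_components: "finite W \<Longrightarrow> finite (components W E)"
  unfolding components_def by simp

lemma reach_in_step: "x \<in> W \<Longrightarrow> y \<in> W \<Longrightarrow> E x y \<Longrightarrow> reach_in W E x y"
  unfolding reach_in_def by (rule r_into_rtranclp) simp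

lemma reach_in_trans: "reach_in W E x y \<Longrightarrow> reach_in W E y z \<Longrightarrow> reach_in W E x z"
  unfolding reach_in_def by (rule rtranclp_trans)

lemma reach_in_sym:
  assumes "symp E" "reach_in W E x y"
  shows "reach_in W E y x"
proof -
  have "symp (\<lambda>x y. x \<in> W \<and> y \<in> W \<and> E x y)"
    using assms(1) by (auto simp: symp_def)
  then show ?thesis
    using assms(2) unfolding reach_in_def by (rule symp_rtranclp[THEN sympD])
qed

lemma reach_in_first_step:
  assumes "reach_in W E x y" "x \<noteq> y"
  shows "\<exists>z\<in>W. x \<in> W \<and> E x z"
proof -
  have "(\<lambda>x y. x \<in> W \<and> y \<in> W \<and> E x y)\<^sup>*\<^sup>* x y"
    using assms(1) unfolding reach_in_def .
  then show ?thesis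
  proof (cases rule: converse_rtranclpE)
    case base
    then show ?thesis using assms(2) by simp
  next
    case (step z)
    then show ?thesis by blast
  qed
qed

lemma self_in_component_of: "x \<in> W \<Longrightarrow> x \<in> component_of W E x"
  unfolding component_of_def reach_in_def by simp

lemma component_of_eq:
  assumes "symp E" "y \<in> component_of W E x"
  shows "component_of W E y = component_of W E x"
proof -
  have xy: "reach_in W E x y"
    using assms(2) unfolding component_of_def by simp
  have yx: "reach_in W E y x"
    using reach_in_sym[OF assms(1) xy] .
  show ?thesis
  proof (intro equalityI subsetI)
    fix z assume "z \<in> component_of W E y"
    then show "z \<in> component_of W E x"
      using reach_in_trans[OF xy] unfolding component_of_def by blast
  next
    fix z assume "z \<in> component_of W E x"
    then show "z \<in> component_of W E y"
      using reach_in_trans[OF yx] unfolding component_of_def by blast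
  qed
qed

lemma components_subset: "C \<in> components W E \<Longrightarrow> C \<subseteq> W"
  unfolding components_def by auto

lemma components_nonempty: "C \<in> components W E \<Longrightarrow> C \<noteq> {}"
  unfolding components_eq_image_component_of by (auto dest: self_in_component_of)

lemma components_eq_component_of:
  assumes "symp E" "C \<in> components W E" "x \<in> C"
  shows "C = component_of W E x"
proof -
  obtain w where "C = component_of W E w"
    using assms(2) unfolding components_eq_image_component_of by blast
  then show ?thesis
    using component_of_eq[OF assms(1), of x W w] assms(3) by simp
qed

lemma components_disjoint:
  assumes "symp E" "C \<in> components W E" "C' \<in> components W E" "C \<noteq> C'"
  shows "C \<inter> C' = {}"
proof (rule ccontr)
  assume "C \<inter> C' \<noteq> {}"
  then obtain x where x: "x \<in> C" "x \<in> C'"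
    by blast
  show False
    using components_eq_component_of[OF assms(1,2) x(1)]
      components_eq_component_of[OF assms(1,3) x(2)] assms(4) by simp
qed

lemma components_closed:
  assumes "symp E" "C \<in> components W E" "x \<in> C" "y \<in> W" "E x y"
  shows "y \<in> C"
proof -
  have "x \<in> W"
    using assms components_subset by blast
  then have "reach_in W E x y"
    using assms by (intro reach_in_step)
  then show ?thesis
    using assms components_eq_component_of[of E C W x] unfolding component_of_def by blast
qed

lemma components_independent:
  assumes "\<forall>x\<in>W. \<forall>y\<in>W. \<not> E x y"
  shows "components W E = (\<lambda>x. {x}) ` W"
proof -
  have "component_of W E x = {x}" if "x \<in> W" for x
  proof
    show "{x} \<subseteq> component_of W E x"
      using self_in_component_of[OF that] by simp
    show "component_of W E x \<subseteq> {x}"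
    proof
      fix y assume "y \<in> component_of W E x"
      then have "reach_in W E x y"
        unfolding component_of_def by simp
      then show "y \<in> {x}"
        using reach_in_first_step[of W E x y] assms by blast
    qed
  qed
  then show ?thesis
    unfolding components_eq_image_component_of by simp
qed

lemma card_components_independent:
  assumes "\<forall>x\<in>W. \<forall>y\<in>W. \<not> E x y"
  shows "card (components W E) = card W"
  unfolding components_independent[OF assms] by (rule card_image) (simp add: inj_on_def)

lemma components_nonadjacent:
  assumes "symp E" "C \<in> components W E" "C' \<in> components W E" "C \<noteq> C'" "x \<in> C" "y \<in> C'"
  shows "\<not> E x y"
proof
  assume "E x y"
  moreover have "y \<in> W"
    using components_subset[OF assms(3)] assms(6) by blast
  ultimately have "y \<in> C"
    using components_closed[OF assms(1,2,5)] by blast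
  then show False
    using components_disjoint[OF assms(1-4)] assms(6) by blast
qed

lemma components_transversal:
  assumes "symp E"
  obtains T where "T \<subseteq> {x \<in> W. P x}" "card T = card {C \<in> components W E. \<exists>x\<in>C. P x}"
    "\<And>x y. x \<in> T \<Longrightarrow> y \<in> T \<Longrightarrow> x \<noteq> y \<Longrightarrow> \<not> E x y"
proof -
  let ?R = "{C \<in> components W E. \<exists>x\<in>C. P x}"
  define rep where "rep C = (SOME x. x \<in> C \<and> P x)" for C
  have rep: "rep C \<in> C \<and> P (rep C)" if "C \<in> ?R" for C
    using that someI_ex[of "\<lambda>x. x \<in> C \<and> P x"] unfolding rep_def by blast
  have "inj_on rep ?R"
  proof (rule inj_onI)
    fix C C' assume C: "C \<in> ?R" "C' \<in> ?R" "rep C = rep C'"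
    show "C = C'"
    proof (rule ccontr)
      assume "C \<noteq> C'"
      then show False
        using components_disjoint[OF assms, of C W C'] rep[OF C(1)] rep[OF C(2)] C by auto
    qed
  qed
  show ?thesis
  proof (rule that[of "rep ` ?R"])
    show "rep ` ?R \<subseteq> {x \<in> W. P x}"
      using rep components_subset[of _ W E] by blast
    show "card (rep ` ?R) = card ?R"
      using card_image[OF \<open>inj_on rep ?R\<close>] .
  next
    fix x y assume "x \<in> rep ` ?R" "y \<in> rep ` ?R" "x \<noteq> y"
    then obtain C C' where "C \<in> ?R" "C' \<in> ?R" "x = rep C" "y = rep C'"
      by blast
    then show "\<not> E x y"
      using components_nonadjacent[OF assms, of C W C' x y] rep \<open>x \<noteq> y\<close> by blast
  qed
qed

lemma components_Diff_nonempty: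
  assumes "symp E" "2 \<le> card (components W E)" "C \<in> components W E"
  shows "W - C \<noteq> {}"
proof -
  have "\<not> components W E \<subseteq> {C}"
  proof
    assume "components W E \<subseteq> {C}"
    then have "card (components W E) \<le> card {C}"
      by (intro card_mono) auto
    then show False
      using assms(2) by simp
  qed
  then obtain C' where C': "C' \<in> components W E" "C' \<noteq> C"
    by blast
  then obtain x where "x \<in> C'"
    using components_nonempty by blast
  then show ?thesis
    using components_disjoint[OF assms(1) C'(1) assms(3) C'(2)] components_subset[OF C'(1)] by blast
qed

lemma card_components_le_card_Diff:
  assumes "symp E" "finite W" "C \<in> components W E"
  shows "card (components W E) \<le> card (W - C) + 1"
proof -
  obtain T where T: "T \<subseteq> {x \<in> W. x \<notin> C}"
    "card T = card {D \<in> components W E. \<exists>x\<in>D. x \<notin> C}"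
    "\<And>x y. x \<in> T \<Longrightarrow> y \<in> T \<Longrightarrow> x \<noteq> y \<Longrightarrow> \<not> E x y"
    using components_transversal[OF assms(1), of W "\<lambda>x. x \<notin> C"] by blast
  have "components W E - {C} \<subseteq> {D \<in> components W E. \<exists>x\<in>D. x \<notin> C}"
  proof
    fix D assume D: "D \<in> components W E - {C}"
    then obtain x where "x \<in> D"
      using components_nonempty[of D W E] by blast
    moreover have "D \<inter> C = {}"
      using components_disjoint[OF assms(1) _ assms(3), of D] D by blast
    ultimately show "D \<in> {D \<in> components W E. \<exists>x\<in>D. x \<notin> C}"
      using D by blast
  qed
  moreover have "finite {D \<in> components W E. \<exists>x\<in>D. x \<notin> C}"
    using finite_components[OF assms(2)] by simp
  ultimately have "card (components W E - {C}) \<le> card T"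
    unfolding T(2) by (rule card_mono[rotated])
  also have "\<dots> \<le> card (W - C)"
    using T(1) by (intro card_mono) (auto simp: assms(2))
  finally show ?thesis
    using card_Suc_Diff1[OF finite_components[OF assms(2)] assms(3)] by simp
qed

definition nbhd :: "'a set \<Rightarrow> ('a \<Rightarrow> 'a \<Rightarrow> bool) \<Rightarrow> 'a set \<Rightarrow> 'a set" where
  "nbhd V E C = {y \<in> V - C. \<exists>x\<in>C. E x y}"

lemma nbhd_component_subset:
  assumes "symp E" "C \<in> components (V - S) E"
  shows "nbhd V E C \<subseteq> S"
proof
  fix y assume "y \<in> nbhd V E C"
  then obtain x where "x \<in> C" "y \<in> V - C" "E x y"
    unfolding nbhd_def by blast
  then show "y \<in> S"
    using components_closed[OF assms \<open>x \<in> C\<close>, of y] by blast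
qed

lemma card_nbhd_partition:
  assumes "finite V" "C \<subseteq> V"
  shows "card C + card (nbhd V E C) + card (V - C - nbhd V E C) = card V"
proof -
  have sub: "C \<union> nbhd V E C \<subseteq> V"
    using assms(2) unfolding nbhd_def by blast
  then have "finite C" "finite (nbhd V E C)"
    using assms(1) by (auto intro: finite_subset[OF _ assms(1)])
  moreover have "C \<inter> nbhd V E C = {}"
    unfolding nbhd_def by blast
  ultimately have "card (C \<union> nbhd V E C) = card C + card (nbhd V E C)"
    by (rule card_Un_disjoint)
  moreover have "card (V - (C \<union> nbhd V E C)) = card V - card (C \<union> nbhd V E C)"
    using card_Diff_subset[OF finite_subset[OF sub assms(1)] sub] .
  moreover have "card (C \<union> nbhd V E C) \<le> card V"
    using sub assms(1) by (rule card_mono[rotated])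
  moreover have "V - C - nbhd V E C = V - (C \<union> nbhd V E C)"
    by blast
  ultimately show ?thesis
    by simp
qed

lemma components_Diff_subset_non_nbhd:
  assumes "symp E" "C \<in> components (V - S) E"
  shows "V - S - C \<subseteq> V - C - nbhd V E C"
  using components_closed[OF assms] unfolding nbhd_def by blast

lemma sum_card_nbhd_components:
  assumes "symp E" "finite V" "S \<subseteq> V"
  shows "(\<Sum>C\<in>components (V - S) E. card (nbhd V E C))
    = (\<Sum>z\<in>S. card {C \<in> components (V - S) E. \<exists>x\<in>C. E x z})"
proof -
  let ?comps = "components (V - S) E"
  have "finite S" "finite ?comps"
    using assms by (simp_all add: finite_subset finite_components)
  then have "(\<Sum>z\<in>S. card {C \<in> ?comps. \<exists>x\<in>C. E x z})
      = (\<Sum>C\<in>?comps. card {z \<in> S. \<exists>x\<in>C. E x z})"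
    using sum_multicount_gen[of S ?comps "\<lambda>z C. \<exists>x\<in>C. E x z"
        "\<lambda>C. card {z \<in> S. \<exists>x\<in>C. E x z}"] by blast
  also have "\<dots> = (\<Sum>C\<in>?comps. card (nbhd V E C))"
  proof (rule sum.cong)
    fix C assume "C \<in> ?comps"
    then have "nbhd V E C \<subseteq> S" "C \<subseteq> V - S"
      using nbhd_component_subset[OF assms(1)] components_subset by blast+
    then have "{z \<in> S. \<exists>x\<in>C. E x z} = nbhd V E C"
      using assms(3) unfolding nbhd_def by blast
    then show "card {z \<in> S. \<exists>x\<in>C. E x z} = card (nbhd V E C)"
      by simp
  qed simp
  finally show ?thesis ..
qed

lemma cut_components_count:
  fixes d e :: nat
  assumes "symp E" "finite V" "S \<subseteq> V"
    and nbhd_ge: "\<And>C. C \<in> components (V - S) E \<Longrightarrow> d \<le> card (nbhd V E C)"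
    and adjacent_le: "\<And>z. z \<in> S \<Longrightarrow> card {C \<in> components (V - S) E. \<exists>x\<in>C. E x z} \<le> e"
  shows "num_components (V - S) E * d \<le> e * card S"
    and "C \<in> components (V - S) E \<Longrightarrow> d < card (nbhd V E C) \<Longrightarrow>
      num_components (V - S) E * d < e * card S"
    and "z \<in> S \<Longrightarrow> card {C \<in> components (V - S) E. \<exists>x\<in>C. E x z} < e \<Longrightarrow>
      num_components (V - S) E * d < e * card S"
proof -
  let ?comps = "components (V - S) E"
  let ?adj = "\<lambda>z. card {C \<in> ?comps. \<exists>x\<in>C. E x z}"
  have fin: "finite S" "finite ?comps"
    using assms by (simp_all add: finite_subset finite_components)
  have lhs: "num_components (V - S) E * d = (\<Sum>C\<in>?comps. d)"
    unfolding num_components_def by simp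
  have rhs: "e * card S = (\<Sum>z\<in>S. e)"
    by simp
  note double_count = sum_card_nbhd_components[OF assms(1-3)]
  have "(\<Sum>C\<in>?comps. d) \<le> (\<Sum>C\<in>?comps. card (nbhd V E C))"
    using nbhd_ge by (rule sum_mono)
  moreover have "(\<Sum>z\<in>S. ?adj z) \<le> (\<Sum>z\<in>S. e)"
    using adjacent_le by (rule sum_mono)
  ultimately show "num_components (V - S) E * d \<le> e * card S"
    unfolding lhs rhs double_count by linarith
  show "num_components (V - S) E * d < e * card S"
    if "C \<in> ?comps" "d < card (nbhd V E C)"
  proof -
    have "(\<Sum>C\<in>?comps. d) < (\<Sum>C\<in>?comps. card (nbhd V E C))"
      using that nbhd_ge by (intro sum_strict_mono_ex1 fin) auto
    then show ?thesis
      using \<open>(\<Sum>z\<in>S. ?adj z) \<le> (\<Sum>z\<in>S. e)\<close> unfolding lhs rhs double_count by linarith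
  qed
  show "num_components (V - S) E * d < e * card S"
    if "z \<in> S" "?adj z < e"
  proof -
    have "(\<Sum>z\<in>S. ?adj z) < (\<Sum>z\<in>S. e)"
      using that adjacent_le by (intro sum_strict_mono_ex1 fin) auto
    then show ?thesis
      using \<open>(\<Sum>C\<in>?comps. d) \<le> (\<Sum>C\<in>?comps. card (nbhd V E C))\<close>
      unfolding lhs rhs double_count by linarith
  qed
qed

section \<open>Binomial estimates\<close>

lemma real_binomial_eq_prod:
  "real (m choose k) = (\<Prod>i = 0..<k. (real m - real i) / real (k - i))"
  by (simp add: binomial_gbinomial gbinomial_altdef_of_nat)

lemma exp_neg_mult_add_le:
  fixes a b u :: real
  assumes "0 < a" "b / a \<le> u"
  shows "exp (- u) * (a + b) \<le> a"
proof -
  have "a + b = a * (1 + b / a)"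
    using assms(1) by (simp add: field_simps)
  also have "\<dots> \<le> a * exp (b / a)"
    using assms(1) exp_ge_add_one_self[of "b / a"] by (intro mult_left_mono) auto
  also have "\<dots> \<le> a * exp u"
    using assms by simp
  finally show ?thesis
    by (simp add: exp_minus field_simps)
qed

text \<open>Factorwise \<open>(n - k - i) / (n - i) \<ge> exp (- k / (n - 2k + 1))\<close>, hence
  \<open>C(n-k,k) / C(n,k) \<ge> exp (- k\<^sup>2 / (n - 2k + 1)) > 1/2\<close>.\<close>
lemma binomial_lt_twice_binomial_diff:
  assumes "2 * k \<le> n" "real k ^ 2 < ln 2 * (real n - 2 * real k + 1)"
  shows "n choose k < 2 * ((n - k) choose k)"
proof -
  define u where "u = real k / (real n - 2 * real k + 1)"
  have pos: "real n - 2 * real k + 1 > 0"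
    using assms(1) by linarith
  have factor: "exp (- u) * ((real n - real i) / real (k - i))
      \<le> (real (n - k) - real i) / real (k - i)" if "i < k" for i
  proof -
    define a where "a = real n - real k - real i"
    have a: "real n - 2 * real k + 1 \<le> a" "0 < a"
      using that pos unfolding a_def by auto
    then have "exp (- u) * (a + real k) \<le> a"
      using pos unfolding u_def by (intro exp_neg_mult_add_le) (auto intro: divide_left_mono)
    then have "exp (- u) * (real n - real i) \<le> a"
      unfolding a_def by simp
    moreover have "real (n - k) = real n - real k"
      using assms(1) by simp
    ultimately show ?thesis
      unfolding a_def by (simp add: divide_right_mono)
  qed
  have "exp (- u) ^ k * real (n choose k)
      = (\<Prod>i = 0..<k. exp (- u) * ((real n - real i) / real (k - i)))"
    unfolding real_binomial_eq_prod prod.distrib by simp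
  also have "\<dots> \<le> real ((n - k) choose k)"
    unfolding real_binomial_eq_prod[of "n - k"] using factor assms(1)
    by (intro prod_mono) (auto intro!: divide_nonneg_pos)
  finally have main: "exp (- (real k * u)) * real (n choose k) \<le> real ((n - k) choose k)"
    by (simp add: exp_of_nat_mult[symmetric])
  have "real k * u < ln 2"
    using assms(2) pos unfolding u_def by (simp add: field_simps power2_eq_square)
  then have "exp (- ln 2) < exp (- (real k * u))"
    by simp
  then have "1 / 2 < exp (- (real k * u))"
    by (simp add: exp_minus)
  moreover have "0 < real (n choose k)"
    using assms(1) by simp
  ultimately have "1 / 2 * real (n choose k) < exp (- (real k * u)) * real (n choose k)"
    by (rule mult_strict_right_mono)
  then have "real (n choose k) < real (2 * ((n - k) choose k))"
    using main by simp
  then show ?thesis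
    by (simp only: of_nat_less_iff)
qed

lemma binomial_diff_log_concave:
  "((n - 2 * k) choose k) * (n choose k) \<le> ((n - k) choose k) ^ 2"
proof (cases "3 * k \<le> n")
  case True
  define f g h where "f i = (real n - 2 * real k - real i) / real (k - i)"
    and "g i = (real n - real i) / real (k - i)"
    and "h i = (real n - real k - real i) / real (k - i)" for i
  have "real ((n - 2 * k) choose k) = (\<Prod>i = 0..<k. f i)"
    using real_binomial_eq_prod[of "n - 2 * k" k] True unfolding f_def by (simp add: of_nat_diff)
  moreover have "real ((n - k) choose k) = (\<Prod>i = 0..<k. h i)"
    using real_binomial_eq_prod[of "n - k" k] True unfolding h_def by (simp add: of_nat_diff)
  moreover have "real (n choose k) = (\<Prod>i = 0..<k. g i)"
    unfolding g_def by (rule real_binomial_eq_prod)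
  moreover have "(\<Prod>i = 0..<k. f i) * (\<Prod>i = 0..<k. g i) \<le> (\<Prod>i = 0..<k. h i) ^ 2"
  proof -
    have "(\<Prod>i = 0..<k. f i * g i) \<le> (\<Prod>i = 0..<k. h i ^ 2)"
    proof (rule prod_mono)
      fix i assume "i \<in> {0..<k}"
      then have i: "0 < real (k - i)" "0 \<le> real n - 2 * real k - real i"
        using True by auto
      have "(real n - 2 * real k - real i) * (real n - real i) \<le> (real n - real k - real i) ^ 2"
        by (simp add: power2_eq_square algebra_simps)
      then show "0 \<le> f i * g i \<and> f i * g i \<le> h i ^ 2"
        using i unfolding f_def g_def h_def
        by (simp add: power2_eq_square divide_right_mono)
    qed
    then show ?thesis
      by (simp only: prod.distrib prod_power_distrib)
  qed
  ultimately have "real ((n - 2 * k) choose k) * real (n choose k) \<le> real ((n - k) choose k) ^ 2"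
    by simp
  then show ?thesis
    by (simp only: of_nat_mult[symmetric] of_nat_power[symmetric] of_nat_le_iff)
next
  case False
  then have "(n - 2 * k) choose k = 0"
    by (simp add: binomial_eq_0)
  then show ?thesis
    by (simp only: mult_0 zero_le)
qed

lemma binomial_diff_lt:
  assumes "0 < k" "k \<le> n"
  shows "(n - k) choose k < n choose k"
proof -
  have "(n - k) choose k \<le> (n - 1) choose k"
    using assms by (intro binomial_right_mono) simp
  also have "\<dots> < ((n - 1) choose (k - 1)) + ((n - 1) choose k)"
    using assms by simp
  also have "\<dots> = n choose k"
    using assms by (cases n; cases k) simp_all
  finally show ?thesis .
qed

lemma binomial_three_term_lt:
  assumes "0 < k" "k \<le> n" "n choose k < 2 * ((n - k) choose k)"
  shows "(n choose k) + 2 * ((n - 2 * k) choose k) < 3 * ((n - k) choose k)"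
proof -
  define N d b where "N = real (n choose k)" and "d = real ((n - k) choose k)"
    and "b = real ((n - 2 * k) choose k)"
  have "N < 2 * d" "d < N"
    using assms binomial_diff_lt[OF assms(1,2)] unfolding N_def d_def by linarith+
  moreover have "b * N \<le> d * d"
  proof -
    have "real (((n - 2 * k) choose k) * (n choose k)) \<le> real (((n - k) choose k) ^ 2)"
      using binomial_diff_log_concave[of n k] by (simp only: of_nat_le_iff)
    then show ?thesis
      unfolding N_def d_def b_def by (simp add: power2_eq_square)
  qed
  moreover have "N * (3 * d - N - 2 * b) - (N - d) * (2 * d - N) = 2 * (d * d - b * N)"
    by (simp add: algebra_simps)
  ultimately have "0 < (N - d) * (2 * d - N)" "N * (3 * d - N - 2 * b) \<ge> (N - d) * (2 * d - N)"
    by (simp_all add: mult_pos_pos)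
  moreover have "0 < N"
    using \<open>d < N\<close> unfolding d_def by linarith
  ultimately have "N + 2 * b < 3 * d"
    by (smt (verit) zero_less_mult_iff)
  then show ?thesis
    unfolding N_def d_def b_def by linarith
qed

lemma three_le_binomial:
  assumes "2 \<le> k" "3 * k \<le> n"
  shows "3 \<le> (n - k - 1) choose (k - 1)"
proof -
  have "(n - k - 1) choose 1 \<le> (n - k - 1) choose (k - 1)"
    using assms by (intro binomial_mono) auto
  then show ?thesis
    using assms by simp
qed

lemma binomial_pred_lt_twice:
  assumes "0 < k" "n choose k < 2 * ((n - k) choose k)"
  shows "(n - 1) choose (k - 1) < 2 * ((n - k - 1) choose (k - 1))"
proof -
  have "n * ((n - 1) choose (k - 1)) = k * (n choose k)"
    using times_binomial_minus1_eq[OF assms(1)] by simp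
  also have "\<dots> < 2 * (k * ((n - k) choose k))"
    using assms by simp
  also have "k * ((n - k) choose k) = (n - k) * ((n - k - 1) choose (k - 1))"
    using times_binomial_minus1_eq[OF assms(1), of "n - k"] by simp
  also have "2 * \<dots> \<le> n * (2 * ((n - k - 1) choose (k - 1)))"
    by simp
  finally show ?thesis
    by simp
qed

lemma threshold_imp_ln2_condition:
  assumes "real n > 2 / ln 2 * (real k)^2 + (2 - 3 / ln 2) * real k + 1 / ln 2"
  shows "(real n - 2 * real k) * ln 2 > (2 * real k - 1) * (real k - 1)"
proof -
  have "(2 / ln 2 * (real k)^2 + (2 - 3 / ln 2) * real k + 1 / ln 2) * ln 2
      = 2 * (real k)^2 + 2 * real k * ln 2 - 3 * real k + 1"
    by (simp add: field_simps power2_eq_square)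
  moreover have "(2 / ln 2 * (real k)^2 + (2 - 3 / ln 2) * real k + 1 / ln 2) * ln 2 < real n * ln 2"
    using assms by (simp add: mult_strict_right_mono)
  ultimately show ?thesis
    by (simp add: algebra_simps power2_eq_square)
qed

lemma ln2_condition_imp_gt_3k:
  assumes "3 \<le> k" "(real n - 2 * real k) * ln 2 > (2 * real k - 1) * (real k - 1)"
  shows "3 * k < n"
proof -
  have "(2 * real k - 1) * (real k - 1) = real k + (2 * real k * (real k - 2) + 1)"
    by (simp add: algebra_simps)
  moreover have "0 \<le> 2 * real k * (real k - 2)"
    using assms(1) by simp
  ultimately have k: "real k \<le> (2 * real k - 1) * (real k - 1)"
    by linarith
  have "0 < real n - 2 * real k"
  proof (rule ccontr)
    assume "\<not> 0 < real n - 2 * real k"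
    moreover have "0 \<le> ln (2::real)"
      by simp
    ultimately have "(real n - 2 * real k) * ln 2 \<le> 0"
      by (intro mult_nonpos_nonneg) auto
    then show False
      using assms k by linarith
  qed
  moreover have "ln (2::real) \<le> 1"
    using ln_le_minus_one[of 2] by simp
  ultimately have "(real n - 2 * real k) * ln 2 \<le> real n - 2 * real k"
    by (intro mult_left_le) auto
  then show ?thesis
    using assms(2) k by linarith
qed

lemma ln2_condition_imp_square_lt:
  assumes "3 \<le> k" "2 * k < n" "(real n - 2 * real k) * ln 2 > (2 * real k - 1) * (real k - 1)"
  shows "real k ^ 2 < ln 2 * (real n - 2 * real k + 1)"
proof -
  define d where "d = real n - 2 * real k"
  have d: "0 < d"
    using assms(2) unfolding d_def by linarith
  have "0 \<le> real k * (real k - 3)"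
    using assms(1) by simp
  then have "0 \<le> (real k * real k - 3 * real k + 1) * d"
    using d by (intro mult_nonneg_nonneg) (auto simp: right_diff_distrib)
  moreover have "0 \<le> (2 * real k - 1) * (real k - 1)"
    using assms(1) by simp
  moreover have "(2 * real k - 1) * (real k - 1) * (d + 1)
      = real k ^ 2 * d + (real k * real k - 3 * real k + 1) * d + (2 * real k - 1) * (real k - 1)"
    by (simp add: algebra_simps power2_eq_square)
  ultimately have "real k ^ 2 * d \<le> (2 * real k - 1) * (real k - 1) * (d + 1)"
    by linarith
  also have "\<dots> < (d * ln 2) * (d + 1)"
    using assms(3) d unfolding d_def by (intro mult_strict_right_mono) auto
  also have "\<dots> = (ln 2 * (d + 1)) * d"
    by (simp only: ac_simps)
  finally have "real k ^ 2 < ln 2 * (d + 1)"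
    using d by (simp only: mult_less_cancel_right_pos)
  then show ?thesis
    unfolding d_def .
qed

lemma threshold_ge_powr_bound:
  assumes "2 \<le> k"
  shows "2 / ln 2 * (real k)^2 + (2 - 3 / ln 2) * real k + 1 / ln 2
           \<ge> (2 powr (1 / (real k - 1)) * (2 * real k) - 1) / (2 powr (1 / (real k - 1)) - 1)"
proof -
  define r where "r = (2::real) powr (1 / (real k - 1))"
  have k: "real k - 1 > 0"
    using assms by simp
  have "r = exp (ln 2 / (real k - 1))"
    unfolding r_def powr_def by simp
  then have r: "ln 2 / (real k - 1) \<le> r - 1"
    using exp_ge_add_one_self[of "ln 2 / (real k - 1)"] by linarith
  moreover have pos: "0 < ln 2 / (real k - 1)"
    using k by simp
  ultimately have "(r * (2 * real k) - 1) / (r - 1) = 2 * real k + (2 * real k - 1) / (r - 1)"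
    by (simp add: field_simps)
  also have "\<dots> \<le> 2 * real k + (2 * real k - 1) / (ln 2 / (real k - 1))"
  proof -
    have "0 < (r - 1) * (ln 2 / (real k - 1))"
      using r pos by (intro mult_pos_pos) auto
    then show ?thesis
      using divide_left_mono[OF r, of "2 * real k - 1"] assms by simp
  qed
  also have "\<dots> = 2 / ln 2 * (real k)^2 + (2 - 3 / ln 2) * real k + 1 / ln 2"
    by (simp add: field_simps power2_eq_square)
  finally show ?thesis
    unfolding r_def .
qed

section \<open>Counting in the Kneser graph\<close>

definition kneser_star :: "nat \<Rightarrow> nat \<Rightarrow> nat \<Rightarrow> nat set set" where
  "kneser_star n k x = {Z \<in> kneser_vertices n k. x \<in> Z}"

definition meeting :: "nat \<Rightarrow> nat \<Rightarrow> nat set \<Rightarrow> nat set set" where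
  "meeting n k X = {Z \<in> kneser_vertices n k. Z \<inter> X \<noteq> {}}"

lemma finite_kneser_vertices: "finite (kneser_vertices n k)"
  unfolding kneser_vertices_def by (rule finite_subset[of _ "Pow {1..n}"]) auto

lemma kneser_vertexD:
  assumes "A \<in> kneser_vertices n k"
  shows "A \<subseteq> {1..n}" "card A = k" "finite A"
  using assms finite_subset[of A "{1..n}"] unfolding kneser_vertices_def by auto

lemma symp_kneser_adj: "symp kneser_adj"
  unfolding kneser_adj_def by (rule sympI) blast

lemma card_kneser_vertices_avoiding:
  assumes "M \<subseteq> {1..n}"
  shows "card {Z \<in> kneser_vertices n k. Z \<inter> M = {}} = (n - card M) choose k"
proof -
  have "{Z \<in> kneser_vertices n k. Z \<inter> M = {}} = {Z. Z \<subseteq> {1..n} - M \<and> card Z = k}"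
    unfolding kneser_vertices_def by blast
  moreover have "card ({1..n} - M) = n - card M"
    using assms by (simp add: card_Diff_subset finite_subset)
  ultimately show ?thesis
    by (simp add: n_subsets)
qed

lemma card_kneser_vertices: "card (kneser_vertices n k) = n choose k"
  using card_kneser_vertices_avoiding[of "{}" n k] by simp

lemma card_kneser_vertices_containing_avoiding:
  assumes "M \<subseteq> {1..n}" "y \<in> {1..n} - M" "0 < k"
  shows "card {Z \<in> kneser_vertices n k. y \<in> Z \<and> Z \<inter> M = {}} = (n - card M - 1) choose (k - 1)"
proof -
  let ?T = "{Z. Z \<subseteq> {1..n} - M - {y} \<and> card Z = k - 1}"
  have "finite M"
    using finite_subset[OF assms(1)] by simp
  have img: "insert y ` ?T = {Z \<in> kneser_vertices n k. y \<in> Z \<and> Z \<inter> M = {}}"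
  proof (intro equalityI subsetI)
    fix Z assume "Z \<in> insert y ` ?T"
    then obtain Z' where Z': "Z' \<subseteq> {1..n} - M - {y}" "card Z' = k - 1" "Z = insert y Z'"
      by blast
    have "y \<notin> Z'" "finite Z'"
      using Z'(1) finite_subset[OF Z'(1)] by auto
    then have "card Z = k"
      using assms(3) Z'(2,3) by simp
    moreover have "Z \<subseteq> {1..n}" "y \<in> Z" "Z \<inter> M = {}"
      using Z'(1,3) assms(2) by auto
    ultimately show "Z \<in> {Z \<in> kneser_vertices n k. y \<in> Z \<and> Z \<inter> M = {}}"
      unfolding kneser_vertices_def by simp
  next
    fix Z assume Z: "Z \<in> {Z \<in> kneser_vertices n k. y \<in> Z \<and> Z \<inter> M = {}}"
    then have "Z \<in> kneser_vertices n k" "y \<in> Z" "Z \<inter> M = {}"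
      by simp_all
    then have "Z - {y} \<in> ?T"
      using kneser_vertexD[of Z n k] by auto
    moreover have "Z = insert y (Z - {y})"
      using \<open>y \<in> Z\<close> by auto
    ultimately show "Z \<in> insert y ` ?T"
      by (rule rev_image_eqI)
  qed
  have "inj_on (insert y) ?T"
  proof (rule inj_onI)
    fix A B assume "A \<in> ?T" "B \<in> ?T" "insert y A = insert y B"
    then show "A = B"
      using insert_ident[of y A B] by blast
  qed
  then have "card {Z \<in> kneser_vertices n k. y \<in> Z \<and> Z \<inter> M = {}} = card ?T"
    using card_image img by fastforce
  also have "\<dots> = card ({1..n} - M - {y}) choose (k - 1)"
    by (rule n_subsets) simp
  also have "card ({1..n} - M - {y}) = n - card M - 1"
    using assms \<open>finite M\<close> by (simp add: card_Diff_subset)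
  finally show ?thesis .
qed

lemma card_kneser_star:
  assumes "x \<in> {1..n}" "0 < k"
  shows "card (kneser_star n k x) = (n - 1) choose (k - 1)"
  using card_kneser_vertices_containing_avoiding[of "{}" n x k] assms
  unfolding kneser_star_def by simp

lemma card_meeting:
  assumes "X \<in> kneser_vertices n k"
  shows "card (meeting n k X) + ((n - k) choose k) = n choose k"
proof -
  let ?A = "{Z \<in> kneser_vertices n k. Z \<inter> X = {}}"
  have "meeting n k X = kneser_vertices n k - ?A"
    unfolding meeting_def by blast
  moreover have "card ?A = (n - k) choose k"
    using card_kneser_vertices_avoiding[of X n k] kneser_vertexD[OF assms] by simp
  moreover have "card ?A \<le> n choose k"
    using card_mono[OF finite_kneser_vertices, of ?A] by (simp add: card_kneser_vertices)
  ultimately show ?thesis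
    by (simp add: card_Diff_subset finite_kneser_vertices card_kneser_vertices)
qed

lemma card_meeting_Int:
  assumes "X \<in> kneser_vertices n k" "Y \<in> kneser_vertices n k"
  shows "card (meeting n k X \<inter> meeting n k Y) + 2 * ((n - k) choose k)
    = (n choose k) + ((n - card (X \<union> Y)) choose k)"
proof -
  let ?A = "{Z \<in> kneser_vertices n k. Z \<inter> X = {}}"
  let ?B = "{Z \<in> kneser_vertices n k. Z \<inter> Y = {}}"
  have fin: "finite ?A" "finite ?B"
    using finite_kneser_vertices by simp_all
  have "meeting n k X \<inter> meeting n k Y = kneser_vertices n k - (?A \<union> ?B)"
    unfolding meeting_def by blast
  then have "card (meeting n k X \<inter> meeting n k Y) + card (?A \<union> ?B) = n choose k"
    using card_Diff_subset[of "?A \<union> ?B" "kneser_vertices n k"] fin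
      card_mono[OF finite_kneser_vertices, of "?A \<union> ?B"]
    by (simp add: card_kneser_vertices)
  moreover have "card (?A \<union> ?B) + card (?A \<inter> ?B) = card ?A + card ?B"
    using card_Un_Int[OF fin] by simp
  moreover have "?A \<inter> ?B = {Z \<in> kneser_vertices n k. Z \<inter> (X \<union> Y) = {}}"
    by blast
  moreover have "X \<union> Y \<subseteq> {1..n}" "X \<subseteq> {1..n}" "Y \<subseteq> {1..n}" "card X = k" "card Y = k"
    using kneser_vertexD[OF assms(1)] kneser_vertexD[OF assms(2)] by auto
  ultimately show ?thesis
    using card_kneser_vertices_avoiding[of _ n k] by simp
qed

lemma card_cross_intersecting_le:
  assumes "C \<subseteq> kneser_vertices n k" "D \<subseteq> kneser_vertices n k" "C \<inter> D = {}"
    and "X \<in> C" "intersecting C" "\<forall>X\<in>C. \<forall>Y\<in>D. X \<inter> Y \<noteq> {}"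
  shows "card C + card D + ((n - k) choose k) \<le> n choose k"
proof -
  have "C \<union> D \<subseteq> meeting n k X"
    using assms unfolding meeting_def intersecting_def by blast
  then have "card (C \<union> D) \<le> card (meeting n k X)"
    by (intro card_mono) (simp_all add: meeting_def finite_kneser_vertices)
  moreover have "card (C \<union> D) = card C + card D"
    using finite_subset[OF assms(1) finite_kneser_vertices]
      finite_subset[OF assms(2) finite_kneser_vertices] assms(3)
    by (rule card_Un_disjoint)
  moreover have "card (meeting n k X) + ((n - k) choose k) = n choose k"
    using assms(1,4) by (intro card_meeting) blast
  ultimately show ?thesis
    by linarith
qed

lemma card_cross_nonintersecting_lt:
  assumes num: "(n choose k) + 2 * ((n - 2 * k) choose k) < 3 * ((n - k) choose k)"
    and "C \<subseteq> kneser_vertices n k" "D \<subseteq> kneser_vertices n k"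
    and "\<not> intersecting C" "\<not> intersecting D" "\<forall>X\<in>C. \<forall>Y\<in>D. X \<inter> Y \<noteq> {}"
  shows "card C + card D + ((n - k) choose k) < n choose k"
proof -
  have bound: "card E + 2 * ((n - k) choose k) \<le> (n choose k) + ((n - 2 * k) choose k)"
    if "E \<subseteq> kneser_vertices n k" "X \<in> kneser_vertices n k" "X' \<in> kneser_vertices n k"
      "X \<inter> X' = {}" "\<forall>Y\<in>E. Y \<inter> X \<noteq> {} \<and> Y \<inter> X' \<noteq> {}" for E X X'
  proof -
    have "card (X \<union> X') = 2 * k"
      using that kneser_vertexD[of X n k] kneser_vertexD[of X' n k] by (simp add: card_Un_disjoint)
    then have "card (meeting n k X \<inter> meeting n k X') + 2 * ((n - k) choose k)
        = (n choose k) + ((n - 2 * k) choose k)"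
      using card_meeting_Int[OF that(2,3)] by simp
    moreover have "card E \<le> card (meeting n k X \<inter> meeting n k X')"
      using that by (intro card_mono) (auto simp: meeting_def finite_kneser_vertices)
    ultimately show ?thesis
      by linarith
  qed
  obtain X X' where "X \<in> C" "X' \<in> C" "X \<inter> X' = {}"
    using assms(4) unfolding intersecting_def by blast
  then have "card D + 2 * ((n - k) choose k) \<le> (n choose k) + ((n - 2 * k) choose k)"
    using assms by (intro bound[of D X X']) (auto simp: Int_commute)
  moreover obtain Y Y' where "Y \<in> D" "Y' \<in> D" "Y \<inter> Y' = {}"
    using assms(5) unfolding intersecting_def by blast
  then have "card C + 2 * ((n - k) choose k) \<le> (n choose k) + ((n - 2 * k) choose k)"
    using assms by (intro bound[of C Y Y']) auto
  ultimately show ?thesis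
    using num by linarith
qed

lemma card_cross_intersecting_two_le:
  assumes "C \<subseteq> kneser_vertices n k" "D \<subseteq> kneser_vertices n k" "C \<inter> D = {}"
    and "\<forall>X\<in>C. \<forall>Y\<in>D. X \<inter> Y \<noteq> {}" "intersecting D" "U \<in> D" "U' \<in> D" "U \<noteq> U'"
  shows "card C + card D + 2 * ((n - k) choose k) \<le> (n choose k) + ((n - k - 1) choose k)"
proof -
  have U: "U \<in> kneser_vertices n k" "U' \<in> kneser_vertices n k"
    using assms by auto
  have "C \<union> D \<subseteq> meeting n k U \<inter> meeting n k U'"
    using assms unfolding meeting_def intersecting_def by blast
  then have "card (C \<union> D) \<le> card (meeting n k U \<inter> meeting n k U')"
    by (intro card_mono) (simp_all add: meeting_def finite_kneser_vertices)
  moreover have "card (C \<union> D) = card C + card D"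
    using finite_subset[OF assms(1) finite_kneser_vertices]
      finite_subset[OF assms(2) finite_kneser_vertices] assms(3)
    by (rule card_Un_disjoint)
  moreover have "k + 1 \<le> card (U \<union> U')"
  proof -
    have "U \<subset> U \<union> U'"
      using assms(8) kneser_vertexD[OF U(1)] kneser_vertexD[OF U(2)]
      by (metis Un_upper1 card_subset_eq psubsetI sup.absorb_iff1)
    then show ?thesis
      using kneser_vertexD[OF U(1)] kneser_vertexD[OF U(2)] psubset_card_mono[of "U \<union> U'" U] by simp
  qed
  then have "(n - card (U \<union> U')) choose k \<le> (n - k - 1) choose k"
    by (intro binomial_right_mono) simp
  ultimately show ?thesis
    using card_meeting_Int[OF U] by linarith
qed

lemma cross_intersecting_non_nbhd:
  assumes "X \<in> C" "Y \<in> V - C - nbhd V kneser_adj C"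
  shows "X \<inter> Y \<noteq> {}"
  using assms unfolding nbhd_def kneser_adj_def by blast

lemma kneser_nbhd_ge:
  assumes num: "(n choose k) + 2 * ((n - 2 * k) choose k) < 3 * ((n - k) choose k)"
    and C: "C \<subseteq> kneser_vertices n k" "C \<noteq> {}"
    and R: "kneser_vertices n k - C - nbhd (kneser_vertices n k) kneser_adj C \<noteq> {}"
  shows "(n - k) choose k \<le> card (nbhd (kneser_vertices n k) kneser_adj C)"
proof -
  let ?V = "kneser_vertices n k"
  let ?R = "?V - C - nbhd ?V kneser_adj C"
  have R_sub: "?R \<subseteq> ?V" "C \<inter> ?R = {}" "?R \<inter> C = {}"
    by auto
  have cross: "\<forall>X\<in>C. \<forall>Y\<in>?R. X \<inter> Y \<noteq> {}"
    using cross_intersecting_non_nbhd by blast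
  then have cross': "\<forall>Y\<in>?R. \<forall>X\<in>C. Y \<inter> X \<noteq> {}"
    by blast
  have "card C + card ?R + ((n - k) choose k) \<le> n choose k"
  proof (cases "intersecting C")
    case True
    obtain X where "X \<in> C"
      using C(2) by blast
    show ?thesis
      by (rule card_cross_intersecting_le[OF C(1) R_sub(1,2) \<open>X \<in> C\<close> True cross])
  next
    case not_C: False
    show ?thesis
    proof (cases "intersecting ?R")
      case True
      obtain Y where "Y \<in> ?R"
        using R by blast
      have "card ?R + card C + ((n - k) choose k) \<le> n choose k"
        by (rule card_cross_intersecting_le[OF R_sub(1) C(1) R_sub(3) \<open>Y \<in> ?R\<close> True cross'])
      then show ?thesis
        by linarith
    next
      case False
      show ?thesis
        using card_cross_nonintersecting_lt[OF num C(1) R_sub(1) not_C False cross] by linarith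
    qed
  qed
  moreover have "card C + card (nbhd ?V kneser_adj C) + card ?R = n choose k"
    using card_nbhd_partition[OF finite_kneser_vertices C(1), of kneser_adj]
    by (simp only: card_kneser_vertices)
  ultimately show ?thesis
    by linarith
qed

lemma kneser_nbhd_gt:
  assumes num: "(n choose k) + 2 * ((n - 2 * k) choose k) < 3 * ((n - k) choose k)"
    and k: "0 < k" "2 * k \<le> n"
    and C: "C \<subseteq> kneser_vertices n k" "\<not> intersecting C"
    and R: "2 \<le> card (kneser_vertices n k - C - nbhd (kneser_vertices n k) kneser_adj C)"
  shows "(n - k) choose k < card (nbhd (kneser_vertices n k) kneser_adj C)"
proof -
  let ?V = "kneser_vertices n k"
  let ?R = "?V - C - nbhd ?V kneser_adj C"
  have R_sub: "?R \<subseteq> ?V" "C \<inter> ?R = {}"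
    by auto
  have cross: "\<forall>X\<in>C. \<forall>Y\<in>?R. X \<inter> Y \<noteq> {}"
    using cross_intersecting_non_nbhd by blast
  have "card C + card ?R + ((n - k) choose k) < n choose k"
  proof (cases "intersecting ?R")
    case True
    have "finite ?R"
      using finite_kneser_vertices by simp
    moreover have "\<not> card ?R \<le> Suc 0"
      using R by simp
    ultimately obtain U U' where U: "U \<in> ?R" "U' \<in> ?R" "U \<noteq> U'"
      using card_le_Suc0_iff_eq by blast
    have "card C + card ?R + 2 * ((n - k) choose k) \<le> (n choose k) + ((n - k - 1) choose k)"
      by (rule card_cross_intersecting_two_le[OF C(1) R_sub cross True U])
    moreover obtain m j where "n - k = Suc m" "k = Suc j"
      using k not0_implies_Suc[of k] not0_implies_Suc[of "n - k"] by force
    then have "(n - k) choose k = ((n - k - 1) choose k) + ((n - k - 1) choose (k - 1))"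
      by simp
    moreover have "0 < (n - k - 1) choose (k - 1)"
      using k by simp
    ultimately show ?thesis
      by linarith
  next
    case False
    show ?thesis
      by (rule card_cross_nonintersecting_lt[OF num C(1) R_sub(1) C(2) False cross])
  qed
  moreover have "card C + card (nbhd ?V kneser_adj C) + card ?R = n choose k"
    using card_nbhd_partition[OF finite_kneser_vertices C(1), of kneser_adj]
    by (simp only: card_kneser_vertices)
  ultimately show ?thesis
    by linarith
qed

text \<open>Representatives disjoint from \<open>Z\<close> of distinct components are non-adjacent, so they form
  an intersecting family of \<open>k\<close>-subsets of the \<open>n - k\<close> points outside \<open>Z\<close>.\<close>
lemma card_components_adjacent_le:
  assumes k: "0 < k" "3 * k \<le> n" and W: "W \<subseteq> kneser_vertices n k"
    and Z: "Z \<in> kneser_vertices n k"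
  shows "card {C \<in> components W kneser_adj. \<exists>X\<in>C. kneser_adj X Z} \<le> (n - k - 1) choose (k - 1)"
proof -
  obtain T where T: "T \<subseteq> {X \<in> W. kneser_adj X Z}"
    "card T = card {C \<in> components W kneser_adj. \<exists>X\<in>C. kneser_adj X Z}"
    "\<And>X Y. X \<in> T \<Longrightarrow> Y \<in> T \<Longrightarrow> X \<noteq> Y \<Longrightarrow> \<not> kneser_adj X Y"
    using components_transversal[OF symp_kneser_adj, of W "\<lambda>X. kneser_adj X Z"] by blast
  have vertex: "A \<subseteq> {1..n}" "card A = k" if "A \<in> T" for A
  proof -
    have "A \<in> kneser_vertices n k"
      using that T(1) W by blast
    then show "A \<subseteq> {1..n}" "card A = k"
      using kneser_vertexD by blast+
  qed
  have "T \<subseteq> {A. A \<subseteq> {1..n} - Z \<and> card A = k}"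
    using T(1) vertex unfolding kneser_adj_def by blast
  moreover have "intersecting T"
    unfolding intersecting_def
  proof (intro ballI)
    fix A B assume "A \<in> T" "B \<in> T"
    show "A \<inter> B \<noteq> {}"
    proof (cases "A = B")
      case True
      then show ?thesis
        using vertex(2)[OF \<open>A \<in> T\<close>] k(1) by auto
    next
      case False
      then show ?thesis
        using T(3)[OF \<open>A \<in> T\<close> \<open>B \<in> T\<close>] unfolding kneser_adj_def by blast
    qed
  qed
  moreover have "card ({1..n} - Z) = n - k"
    using kneser_vertexD[OF Z] by (simp add: card_Diff_subset)
  ultimately have "card T \<le> (n - k - 1) choose (k - 1)"
    using Erdos_Ko_Rado[of "{1..n} - Z" T k] k by simp
  then show ?thesis
    using T(2) by simp
qed

section \<open>Vertex cuts of the Kneser graph\<close>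

lemma binomial_absorption_le_iff:
  fixes c s :: nat
  assumes "0 < k" "2 * k \<le> n"
  shows "c * ((n - k) choose k) \<le> ((n - k - 1) choose (k - 1)) * s \<longleftrightarrow> c * (n - k) \<le> k * s"
    and "c * ((n - k) choose k) < ((n - k - 1) choose (k - 1)) * s \<longleftrightarrow> c * (n - k) < k * s"
proof -
  define d e where "d = (n - k) choose k" and "e = (n - k - 1) choose (k - 1)"
  have "k * d = (n - k) * e"
    unfolding d_def e_def using times_binomial_minus1_eq[OF assms(1), of "n - k"] by simp
  then have lhs: "k * (c * d) = e * (c * (n - k))" and rhs: "k * (e * s) = e * (k * s)"
    by (simp_all only: ac_simps)
  have "0 < e"
    using assms unfolding e_def by simp
  show "c * d \<le> e * s \<longleftrightarrow> c * (n - k) \<le> k * s"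
    using mult_le_cancel1[of k "c * d" "e * s"] mult_le_cancel1[of e "c * (n - k)" "k * s"]
      \<open>0 < e\<close> assms(1) unfolding lhs rhs by simp
  show "c * d < e * s \<longleftrightarrow> c * (n - k) < k * s"
    using mult_less_cancel1[of k "c * d" "e * s"] mult_less_cancel1[of e "c * (n - k)" "k * s"]
      \<open>0 < e\<close> assms(1) unfolding lhs rhs by simp
qed

lemma cut_ratio_iff:
  fixes c s n k :: nat
  assumes "0 < c" "0 < k" "k \<le> n"
  shows "real n / real k - 1 \<le> real s / real c \<longleftrightarrow> c * (n - k) \<le> k * s"
    and "real s / real c = real n / real k - 1 \<longleftrightarrow> c * (n - k) = k * s"
proof -
  have "real n / real k - 1 = real (n - k) / real k"
    using assms by (simp add: field_simps of_nat_diff)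
  moreover have "real (n - k) / real k \<le> real s / real c \<longleftrightarrow> real (c * (n - k)) \<le> real (k * s)"
    using assms by (simp add: field_simps)
  moreover have "real s / real c = real (n - k) / real k \<longleftrightarrow> real (c * (n - k)) = real (k * s)"
    using assms by (auto simp: field_simps)
  ultimately show "real n / real k - 1 \<le> real s / real c \<longleftrightarrow> c * (n - k) \<le> k * s"
    and "real s / real c = real n / real k - 1 \<longleftrightarrow> c * (n - k) = k * s"
    by (simp_all only: of_nat_le_iff of_nat_eq_iff)
qed

context
  fixes n k :: nat and S V :: "nat set set"
  defines V_def: "V \<equiv> kneser_vertices n k"
  assumes k: "0 < k" "3 * k \<le> n"
    and num: "(n choose k) + 2 * ((n - 2 * k) choose k) < 3 * ((n - k) choose k)"
    and S: "vertex_cut V kneser_adj S"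
begin

lemma kneser_cut_subset: "S \<subseteq> V"
  using S unfolding vertex_cut_def by simp

lemma kneser_component_nbhd_ge:
  assumes C: "C \<in> components (V - S) kneser_adj"
  shows "(n - k) choose k \<le> card (nbhd V kneser_adj C)"
  unfolding V_def
proof (rule kneser_nbhd_ge[OF num])
  have "2 \<le> card (components (V - S) kneser_adj)"
    using S unfolding vertex_cut_def num_components_def by simp
  then show "kneser_vertices n k - C - nbhd (kneser_vertices n k) kneser_adj C \<noteq> {}"
    using components_Diff_nonempty[OF symp_kneser_adj _ C]
      components_Diff_subset_non_nbhd[OF symp_kneser_adj C] unfolding V_def by blast
  show "C \<subseteq> kneser_vertices n k" "C \<noteq> {}"
    using components_subset[OF C] components_nonempty[OF C] unfolding V_def by auto
qed

lemma kneser_cut_vertex_adjacent_le: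
  assumes "Z \<in> S"
  shows "card {C \<in> components (V - S) kneser_adj. \<exists>X\<in>C. kneser_adj X Z} \<le> (n - k - 1) choose (k - 1)"
  using card_components_adjacent_le[OF k, of "V - S" Z] assms kneser_cut_subset unfolding V_def by blast

lemma kneser_cut_count:
  shows "num_components (V - S) kneser_adj * ((n - k) choose k) \<le> ((n - k - 1) choose (k - 1)) * card S"
    and "C \<in> components (V - S) kneser_adj \<Longrightarrow> (n - k) choose k < card (nbhd V kneser_adj C) \<Longrightarrow>
      num_components (V - S) kneser_adj * ((n - k) choose k) < ((n - k - 1) choose (k - 1)) * card S"
    and "Z \<in> S \<Longrightarrow>
      card {C \<in> components (V - S) kneser_adj. \<exists>X\<in>C. kneser_adj X Z} < (n - k - 1) choose (k - 1) \<Longrightarrow>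
      num_components (V - S) kneser_adj * ((n - k) choose k) < ((n - k - 1) choose (k - 1)) * card S"
  using cut_components_count[OF symp_kneser_adj finite_kneser_vertices[of n k, folded V_def]
      kneser_cut_subset] kneser_component_nbhd_ge kneser_cut_vertex_adjacent_le
  by blast+

lemma kneser_cut_bound: "num_components (V - S) kneser_adj * (n - k) \<le> k * card S"
  using kneser_cut_count(1) binomial_absorption_le_iff(1) k by simp

lemma kneser_cut_strict_if_small_non_nbhd:
  assumes "2 \<le> k" "C \<in> components (V - S) kneser_adj" "card (V - C - nbhd V kneser_adj C) \<le> 1"
  shows "num_components (V - S) kneser_adj * (n - k) < k * card S"
proof -
  have fin: "finite V"
    unfolding V_def by (rule finite_kneser_vertices)
  have "card (V - S - C) \<le> card (V - C - nbhd V kneser_adj C)"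
    using components_Diff_subset_non_nbhd[OF symp_kneser_adj assms(2)]
    by (rule card_mono[rotated]) (simp add: fin)
  then have "num_components (V - S) kneser_adj \<le> 2"
    using card_components_le_card_Diff[OF symp_kneser_adj finite_Diff[OF fin] assms(2)] assms(3)
    unfolding num_components_def by linarith
  then have "num_components (V - S) kneser_adj * (n - k) \<le> 2 * (n - k)"
    by simp
  also have "\<dots> < 3 * (n - k)"
    using k by simp
  also have "\<dots> \<le> (n - k) * ((n - k - 1) choose (k - 1))"
    using three_le_binomial[OF assms(1) k(2)] by simp
  also have "\<dots> = k * ((n - k) choose k)"
    using times_binomial_minus1_eq[OF k(1), of "n - k"] by simp
  also have "\<dots> \<le> k * card S"
  proof -
    have "(n - k) choose k \<le> card (nbhd V kneser_adj C)"
      by (rule kneser_component_nbhd_ge[OF assms(2)])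
    also have "\<dots> \<le> card S"
      using nbhd_component_subset[OF symp_kneser_adj assms(2)]
      by (rule card_mono[rotated]) (rule finite_subset[OF kneser_cut_subset fin])
    finally show ?thesis
      by simp
  qed
  finally show ?thesis .
qed

lemma kneser_cut_strict_if_not_intersecting:
  assumes "2 \<le> k" "\<not> intersecting (V - S)"
  shows "num_components (V - S) kneser_adj * (n - k) < k * card S"
proof -
  obtain X X' where X: "X \<in> V - S" "X' \<in> V - S" "X \<inter> X' = {}"
    using assms(2) unfolding intersecting_def by blast
  define C where "C = component_of (V - S) kneser_adj X"
  have C: "C \<in> components (V - S) kneser_adj"
    using X(1) unfolding C_def components_eq_image_component_of by blast
  have "X \<in> C"
    unfolding C_def using self_in_component_of[OF X(1)] .
  moreover have "X' \<in> C"
    using components_closed[OF symp_kneser_adj C \<open>X \<in> C\<close> X(2)] X(3)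
    unfolding kneser_adj_def by blast
  ultimately have "\<not> intersecting C"
    using X(3) unfolding intersecting_def by blast
  show ?thesis
  proof (cases "card (V - C - nbhd V kneser_adj C) \<le> 1")
    case True
    then show ?thesis
      using kneser_cut_strict_if_small_non_nbhd[OF assms(1) C] by blast
  next
    case False
    then have "(n - k) choose k < card (nbhd V kneser_adj C)"
      using components_subset[OF C] \<open>\<not> intersecting C\<close> k unfolding V_def
      by (intro kneser_nbhd_gt[OF num]) auto
    then show ?thesis
      using kneser_cut_count(2)[OF C] binomial_absorption_le_iff(2) k by simp
  qed
qed

lemma kneser_tight_cut:
  assumes "2 \<le> k" "num_components (V - S) kneser_adj * (n - k) = k * card S"
  shows "intersecting (V - S)"
    and "card (V - S) = (n - 1) choose (k - 1)"
    and "Z \<in> S \<Longrightarrow> (n - k - 1) choose (k - 1) \<le> card {X \<in> V - S. X \<inter> Z = {}}"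
proof -
  show "intersecting (V - S)"
    using kneser_cut_strict_if_not_intersecting[OF assms(1)] assms(2) by fastforce
  then have singletons: "components (V - S) kneser_adj = (\<lambda>X. {X}) ` (V - S)"
    by (intro components_independent) (auto simp: intersecting_def kneser_adj_def)
  note SV = kneser_cut_subset
  have "num_components (V - S) kneser_adj = card (V - S)"
    unfolding num_components_def singletons by (rule card_image) (simp add: inj_on_def)
  then have "card (V - S) * (n - k) = k * card S"
    using assms(2) by simp
  moreover have "n = (n - k) + k"
    using k by simp
  then have "card (V - S) * n = card (V - S) * (n - k) + k * card (V - S)"
    by (metis add_mult_distrib2 mult.commute)
  moreover have "card S + card (V - S) = n choose k"
    using card_Diff_subset[OF finite_subset[OF SV] SV] card_mono[OF _ SV]
    unfolding V_def by (simp add: finite_kneser_vertices card_kneser_vertices)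
  then have "k * card S + k * card (V - S) = n * ((n - 1) choose (k - 1))"
    using times_binomial_minus1_eq[OF k(1), of n] by (simp flip: add_mult_distrib2)
  ultimately have "card (V - S) * n = n * ((n - 1) choose (k - 1))"
    by linarith
  then show "card (V - S) = (n - 1) choose (k - 1)"
    using k by simp
  have "{C \<in> components (V - S) kneser_adj. \<exists>X\<in>C. kneser_adj X Z}
      = (\<lambda>X. {X}) ` {X \<in> V - S. X \<inter> Z = {}}" for Z
    unfolding singletons kneser_adj_def by auto
  then have "card {C \<in> components (V - S) kneser_adj. \<exists>X\<in>C. kneser_adj X Z}
      = card {X \<in> V - S. X \<inter> Z = {}}" for Z
    using card_image[OF inj_on_subset[OF inj_singleton subset_UNIV]] by metis
  moreover assume "Z \<in> S"
  ultimately show "(n - k - 1) choose (k - 1) \<le> card {X \<in> V - S. X \<inter> Z = {}}"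
    using kneser_cut_count(3)[of Z] binomial_absorption_le_iff(2) k assms(2) by force
qed

end

lemma card_intersecting_containing_le:
  assumes "0 < k" "W \<subseteq> kneser_vertices n k" "intersecting W"
    and "y \<in> {1..n}" "B \<in> W" "y \<notin> B"
  shows "card {X \<in> W. y \<in> X} + ((n - k - 1) choose (k - 1)) \<le> (n - 1) choose (k - 1)"
proof -
  let ?T = "{Z \<in> kneser_vertices n k. y \<in> Z \<and> Z \<inter> B = {}}"
  have B: "B \<subseteq> {1..n}" "card B = k"
    using assms(2,5) kneser_vertexD by blast+
  have "{X \<in> W. y \<in> X} \<subseteq> kneser_star n k y - ?T"
    using assms(2,3,5) unfolding intersecting_def kneser_star_def by blast
  then have "card {X \<in> W. y \<in> X} \<le> card (kneser_star n k y - ?T)"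
    by (rule card_mono[rotated]) (simp add: kneser_star_def finite_kneser_vertices)
  also have "\<dots> = card (kneser_star n k y) - card ?T"
    by (rule card_Diff_subset) (auto simp: kneser_star_def finite_kneser_vertices)
  finally have "card {X \<in> W. y \<in> X} \<le> card (kneser_star n k y) - card ?T" .
  moreover have "card ?T \<le> card (kneser_star n k y)"
    by (rule card_mono) (auto simp: kneser_star_def finite_kneser_vertices)
  moreover have "card ?T = (n - k - 1) choose (k - 1)"
    using card_kneser_vertices_containing_avoiding[OF B(1) _ assms(1), of y] assms(4,6) B(2)
    by simp
  moreover have "card (kneser_star n k y) = (n - 1) choose (k - 1)"
    using card_kneser_star[OF assms(4,1)] .
  ultimately show ?thesis
    by linarith
qed

lemma kneser_vertex_disjoint_covering:
  assumes "3 * k \<le> n" "A \<in> kneser_vertices n k" "X \<in> kneser_vertices n k"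
  shows "\<exists>Z \<in> kneser_vertices n k. Z \<inter> X = {} \<and> A - X \<subseteq> Z"
proof -
  note A = kneser_vertexD[OF assms(2)] and X = kneser_vertexD[OF assms(3)]
  have "card (A \<union> X) \<le> 2 * k"
    using card_Un_le[of A X] A X by simp
  moreover have "card ({1..n} - (A \<union> X)) = n - card (A \<union> X)"
    using A X by (simp add: card_Diff_subset)
  moreover have "card (A \<inter> X) \<le> k"
    using card_mono[OF A(3), of "A \<inter> X"] A by simp
  ultimately have "card (A \<inter> X) \<le> card ({1..n} - (A \<union> X))"
    using assms(1) by linarith
  then obtain Q where Q: "Q \<subseteq> {1..n} - (A \<union> X)" "card Q = card (A \<inter> X)" "finite Q"
    by (rule obtain_subset_with_card_n)
  have "card (A - X) = k - card (A \<inter> X)"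
    using card_Diff_subset_Int[of A X] A by simp
  then have "card ((A - X) \<union> Q) = k"
    using card_Un_disjoint[of "A - X" Q] Q A \<open>card (A \<inter> X) \<le> k\<close> by auto
  moreover have "(A - X) \<union> Q \<subseteq> {1..n}"
    using Q(1) A(1) by blast
  ultimately have "(A - X) \<union> Q \<in> kneser_vertices n k"
    unfolding kneser_vertices_def by blast
  moreover have "((A - X) \<union> Q) \<inter> X = {}"
    using Q(1) by blast
  ultimately show ?thesis
    by blast
qed

text \<open>If \<open>W\<close> is not a star, take \<open>A \<in> W\<close> and \<open>X\<^sub>0 \<in> W\<close> with \<open>X\<^sub>0 \<inter> A\<close> as small as possible,
  and a vertex \<open>Z\<close> disjoint from \<open>X\<^sub>0\<close> containing \<open>A - X\<^sub>0\<close>. Then \<open>Z \<notin> W\<close>, and every member of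
  \<open>W\<close> disjoint from \<open>Z\<close> meets \<open>A\<close> exactly in \<open>X\<^sub>0 \<inter> A\<close>, so contains a fixed \<open>y \<in> X\<^sub>0 \<inter> A\<close>.
  As some member of \<open>W\<close> misses \<open>y\<close>, fewer than \<open>C(n-k-1,k-1)\<close> members contain \<open>y\<close>.\<close>
lemma intersecting_saturated_is_star:
  assumes k: "0 < k" "3 * k \<le> n"
    and binom: "(n - 1) choose (k - 1) < 2 * ((n - k - 1) choose (k - 1))"
    and W: "W \<subseteq> kneser_vertices n k" "intersecting W" "W \<noteq> {}"
    and saturated: "\<forall>Z \<in> kneser_vertices n k - W. (n - k - 1) choose (k - 1) \<le> card {X \<in> W. X \<inter> Z = {}}"
  shows "\<exists>x \<in> {1..n}. W \<subseteq> kneser_star n k x"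
proof (rule ccontr)
  assume no_star: "\<not> ?thesis"
  obtain A where A: "A \<in> W"
    using W(3) by blast
  obtain X0 where X0: "X0 \<in> W" "\<forall>X\<in>W. card (X0 \<inter> A) \<le> card (X \<inter> A)"
    using ex_has_least_nat[of "\<lambda>X. X \<in> W" A "\<lambda>X. card (X \<inter> A)"] A by blast
  obtain y where y: "y \<in> X0 \<inter> A"
    using W(2) X0(1) A unfolding intersecting_def by blast
  have "y \<in> {1..n}"
    using y A W(1) kneser_vertexD(1) by blast
  then obtain B where B: "B \<in> W" "y \<notin> B"
    using no_star W(1) unfolding kneser_star_def by blast
  obtain Z where Z: "Z \<in> kneser_vertices n k" "Z \<inter> X0 = {}" "A - X0 \<subseteq> Z"
    using kneser_vertex_disjoint_covering[OF k(2)] A X0(1) W(1) by blast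
  have "Z \<notin> W"
    using Z(2) X0(1) W(2) unfolding intersecting_def by blast
  have "{X \<in> W. X \<inter> Z = {}} \<subseteq> {X \<in> W. y \<in> X}"
  proof
    fix X assume X: "X \<in> {X \<in> W. X \<inter> Z = {}}"
    then have "X \<inter> A \<subseteq> X0 \<inter> A"
      using Z(3) by blast
    moreover have "card (X0 \<inter> A) \<le> card (X \<inter> A)"
      using X0(2) X by blast
    moreover have "finite (X0 \<inter> A)"
      using kneser_vertexD(3) X0(1) W(1) by blast
    ultimately have "X \<inter> A = X0 \<inter> A"
      using card_seteq by blast
    then show "X \<in> {X \<in> W. y \<in> X}"
      using X y by blast
  qed
  then have "card {X \<in> W. X \<inter> Z = {}} \<le> card {X \<in> W. y \<in> X}"
    by (rule card_mono[rotated]) (simp add: finite_subset[OF W(1) finite_kneser_vertices])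
  moreover have "card {X \<in> W. y \<in> X} + ((n - k - 1) choose (k - 1)) \<le> (n - 1) choose (k - 1)"
    by (rule card_intersecting_containing_le[OF k(1) W(1,2) \<open>y \<in> {1..n}\<close> B])
  moreover have "(n - k - 1) choose (k - 1) \<le> card {X \<in> W. X \<inter> Z = {}}"
    using saturated Z(1) \<open>Z \<notin> W\<close> by blast
  ultimately show False
    using binom by linarith
qed

lemma max_independent_set_kneser_star:
  assumes "0 < k" "2 * k \<le> n" "x \<in> {1..n}"
  shows "max_independent_set (kneser_vertices n k) kneser_adj (kneser_star n k x)"
  unfolding max_independent_set_def
proof (intro conjI allI impI)
  show "independent_set (kneser_vertices n k) kneser_adj (kneser_star n k x)"
    unfolding independent_set_def kneser_adj_def kneser_star_def by blast
next
  fix J assume J: "independent_set (kneser_vertices n k) kneser_adj J"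
  then have "J \<subseteq> {A. A \<subseteq> {1..n} \<and> card A = k}" "intersecting J"
    unfolding independent_set_def kneser_vertices_def kneser_adj_def intersecting_def by auto
  then have "card J \<le> (card {1..n} - 1) choose (k - 1)"
    using assms(1,2) by (intro Erdos_Ko_Rado) auto
  then show "card J \<le> card (kneser_star n k x)"
    using card_kneser_star[OF assms(3,1)] by simp
qed

lemma kneser_star_complement_cut:
  assumes "2 \<le> k" "3 * k \<le> n" "x \<in> {1..n}"
  shows "vertex_cut (kneser_vertices n k) kneser_adj (kneser_vertices n k - kneser_star n k x)"
    and "real (card (kneser_vertices n k - kneser_star n k x))
      / real (num_components (kneser_vertices n k - (kneser_vertices n k - kneser_star n k x)) kneser_adj)
      = real n / real k - 1"
proof -
  let ?V = "kneser_vertices n k" and ?I = "kneser_star n k x"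
  have I: "?I \<subseteq> ?V" "?V - (?V - ?I) = ?I"
    unfolding kneser_star_def by auto
  have "num_components ?I kneser_adj = card ?I"
    unfolding num_components_def kneser_star_def kneser_adj_def
    by (rule card_components_independent) blast
  moreover have cI: "card ?I = (n - 1) choose (k - 1)"
    using card_kneser_star[OF assms(3)] assms(1) by simp
  moreover have "3 \<le> (n - 1) choose (k - 1)"
    using three_le_binomial[OF assms(1,2)] binomial_right_mono[of "n - k - 1" "n - 1" "k - 1"]
    by linarith
  ultimately show "vertex_cut ?V kneser_adj (?V - ?I)"
    unfolding vertex_cut_def using I by simp
  have "card (?V - ?I) + card ?I = n choose k"
    using card_Diff_subset[OF finite_subset[OF I(1) finite_kneser_vertices] I(1)]
      card_mono[OF finite_kneser_vertices I(1)] by (simp add: card_kneser_vertices)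
  then have "k * card (?V - ?I) + k * card ?I = n * card ?I"
    using times_binomial_minus1_eq[of k n] assms(1) cI by (simp flip: add_mult_distrib2)
  moreover have "n = (n - k) + k"
    using assms by simp
  then have "n * card ?I = card ?I * (n - k) + k * card ?I"
    by (metis add_mult_distrib2 mult.commute)
  ultimately have "card ?I * (n - k) = k * card (?V - ?I)"
    by linarith
  moreover have "0 < card ?I"
    using cI \<open>3 \<le> (n - 1) choose (k - 1)\<close> by linarith
  ultimately show "real (card (?V - ?I)) / real (num_components (?V - (?V - ?I)) kneser_adj)
      = real n / real k - 1"
    using cut_ratio_iff(2)[where c = "card ?I" and s = "card (?V - ?I)"] I(2)
      \<open>num_components ?I kneser_adj = card ?I\<close> assms by simp
qed

lemma kneser_cut_ratio_ge:
  assumes "0 < k" "3 * k \<le> n"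
    and "(n choose k) + 2 * ((n - 2 * k) choose k) < 3 * ((n - k) choose k)"
    and S: "vertex_cut (kneser_vertices n k) kneser_adj S"
  shows "real n / real k - 1 \<le> real (card S) / real (num_components (kneser_vertices n k - S) kneser_adj)"
proof -
  have "0 < num_components (kneser_vertices n k - S) kneser_adj"
    using S unfolding vertex_cut_def by simp
  then show ?thesis
    using cut_ratio_iff(1) kneser_cut_bound[OF assms] assms(1,2) by simp
qed

theorem kneser_toughness:
  assumes "2 \<le> k" "3 * k \<le> n" "n choose k < 2 * ((n - k) choose k)"
  shows "toughness (kneser_vertices n k) kneser_adj = real n / real k - 1"
  unfolding toughness_def
proof (rule cInf_eq_minimum)
  have "1 \<in> {1..n}"
    using assms by simp
  note star_cut = kneser_star_complement_cut[OF assms(1,2) this]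
  show "real n / real k - 1 \<in> {real (card S) / real (num_components (kneser_vertices n k - S) kneser_adj)
      | S. vertex_cut (kneser_vertices n k) kneser_adj S}"
    using star_cut by (intro CollectI exI[of _ "kneser_vertices n k - kneser_star n k 1"]) simp
  show "real n / real k - 1 \<le> x" if x: "x \<in> {real (card S) / real (num_components (kneser_vertices n k - S) kneser_adj)
      | S. vertex_cut (kneser_vertices n k) kneser_adj S}" for x
  proof -
    obtain S where "vertex_cut (kneser_vertices n k) kneser_adj S"
      "x = real (card S) / real (num_components (kneser_vertices n k - S) kneser_adj)"
      using x by blast
    moreover have "(n choose k) + 2 * ((n - 2 * k) choose k) < 3 * ((n - k) choose k)"
      using binomial_three_term_lt assms by simp
    ultimately show ?thesis
      using kneser_cut_ratio_ge[of k n S] assms by simp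
  qed
qed

theorem kneser_tight_cut_eq_star_complement:
  assumes k: "2 \<le> k" "3 * k \<le> n" and binom: "n choose k < 2 * ((n - k) choose k)"
    and S: "vertex_cut (kneser_vertices n k) kneser_adj S"
    and tight: "real (card S) / real (num_components (kneser_vertices n k - S) kneser_adj)
      = real n / real k - 1"
  shows "\<exists>x \<in> {1..n}. S = kneser_vertices n k - kneser_star n k x"
proof -
  let ?V = "kneser_vertices n k"
  define W where "W = ?V - S"
  have k0: "0 < k"
    using k by simp
  have "0 < num_components W kneser_adj"
    using S unfolding vertex_cut_def W_def by simp
  then have eq: "num_components W kneser_adj * (n - k) = k * card S"
    using cut_ratio_iff(2) tight k unfolding W_def by simp
  have num: "(n choose k) + 2 * ((n - 2 * k) choose k) < 3 * ((n - k) choose k)"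
    using binomial_three_term_lt[OF k0 _ binom] k(2) by simp
  note tight_cut = kneser_tight_cut[OF k0 k(2) num S k(1) eq[unfolded W_def], folded W_def]
  have W: "W \<subseteq> ?V" "?V - W = S"
    using S unfolding vertex_cut_def W_def by auto
  then have "W \<noteq> {}"
    using tight_cut(2) k by auto
  moreover have "\<forall>Z \<in> ?V - W. (n - k - 1) choose (k - 1) \<le> card {X \<in> W. X \<inter> Z = {}}"
    using tight_cut(3) W(2) by simp
  ultimately obtain x where x: "x \<in> {1..n}" "W \<subseteq> kneser_star n k x"
    using intersecting_saturated_is_star[OF k0 k(2) binomial_pred_lt_twice[OF k0 binom] W(1)]
      tight_cut(1) by blast
  moreover have "card W = card (kneser_star n k x)"
    using tight_cut(2) card_kneser_star[OF x(1) k0] by simp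
  ultimately have "W = kneser_star n k x"
    using card_subset_eq[of "kneser_star n k x" W] by (simp add: kneser_star_def finite_kneser_vertices)
  then show ?thesis
    using W(2) x(1) by blast
qed

theorem corollary3p2:
  fixes n k :: nat
  assumes "k \<ge> 3"
    and "real n > 2 / ln 2 * (real k)^2 + (2 - 3 / ln 2) * real k + 1 / ln 2"
  shows "2 / ln 2 * (real k)^2 + (2 - 3 / ln 2) * real k + 1 / ln 2
           \<ge> (2 powr (1 / (real k - 1)) * (2 * real k) - 1) / (2 powr (1 / (real k - 1)) - 1)
         \<and> toughness (kneser_vertices n k) kneser_adj = real n / real k - 1
         \<and> (\<forall>S. vertex_cut (kneser_vertices n k) kneser_adj S \<and>
           real (card S) / real (num_components (kneser_vertices n k - S) kneser_adj)
             = real n / real k - 1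
         \<longrightarrow> (\<exists>I. max_independent_set (kneser_vertices n k) kneser_adj I
                  \<and> S = kneser_vertices n k - I))"
proof -
  have ln2: "(real n - 2 * real k) * ln 2 > (2 * real k - 1) * (real k - 1)"
    using threshold_imp_ln2_condition[OF assms(2)] .
  then have "3 * k < n"
    using ln2_condition_imp_gt_3k[OF assms(1)] by blast
  then have binom: "n choose k < 2 * ((n - k) choose k)"
    using ln2_condition_imp_square_lt[OF assms(1) _ ln2]
    by (intro binomial_lt_twice_binomial_diff) auto
  have k: "2 \<le> k" "3 * k \<le> n"
    using assms(1) \<open>3 * k < n\<close> by auto
  have "\<exists>I. max_independent_set (kneser_vertices n k) kneser_adj I \<and> S = kneser_vertices n k - I"
    if cut: "vertex_cut (kneser_vertices n k) kneser_adj S"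
      "real (card S) / real (num_components (kneser_vertices n k - S) kneser_adj) = real n / real k - 1"
    for S
  proof -
    obtain x where "x \<in> {1..n}" "S = kneser_vertices n k - kneser_star n k x"
      using kneser_tight_cut_eq_star_complement[OF k binom cut] by blast
    then show ?thesis
      using max_independent_set_kneser_star[of k n x] k by auto
  qed
  then show ?thesis
    using threshold_ge_powr_bound[of k] kneser_toughness[OF k binom] assms(1) by auto
qed

end
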